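(* Consider a concurrent singly linked list in which every node $X$ has a pointer field $X.\mathit{next}$ and an integer timestamp $X.\mathit{ts}$, and in which timestamps are drawn from a shared logical clock, each draw returning a value strictly greater than every previously drawn value. The operation $\mathrm{InsertAfter}(A,X)$ inserts a new node $X$ immediately after an existing node $A$ by repeating the following attempt until it succeeds: (i) read $N := A.\mathit{next}$; (ii) set $X.\mathit{ts}$ to a freshly drawn clock value and set $X.\mathit{next} := N$; (iii) perform $\mathrm{CAS}(A.\mathit{next}, N, X)$. Here $\mathrm{CAS}(p, \text{old}, \text{new})$ is an atomic compare-and-swap: it sets $p := \text{new}$ and succeeds if and only if $p = \text{old}$ at that moment. Suppose two requests $\mathrm{InsertAfter}(A,B)$ and $\mathrm{InsertAfter}(A,C)$ are executed simultaneously, and no other operation modifies $A.\mathit{next}$ while they run. Then the node that gets inserted first (the one whose compare-and-swap on $A.\mathit{next}$ succeeds first) has the lower final timestamp, and once both operations have completed it is farther away from $A$ in the list. Concretely, if $B$ is inserted first, then $B.\mathit{ts} < C.\mathit{ts}$ and the list contains the consecutive segment $A \to C \to B$.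
   Context: A node's "final timestamp" is the value $X.\mathit{ts}$ it holds after its successful insertion attempt. Failed compare-and-swap attempts are retried from step (i), so each retry draws a fresh timestamp. *)

theory Defs
  imports Main
begin

text \<open>Interleaving model of two concurrent InsertAfter(A,B) and InsertAfter(A,C)
operations. Pointers are 'n option (None = null). Each thread is identified by the
new node X it inserts. Phases: PRead = step (i), PPrep = step (ii), PCas = step (iii).\<close>

datatype phase = PRead | PPrep | PCas | PDone

record 'n conf =
  nxt :: "'n \<Rightarrow> 'n option"
  ts  :: "'n \<Rightarrow> int"
  clk :: int                    \<comment> \<open>largest value drawn so far from the shared clock\<close>
  ph  :: "'n \<Rightarrow> phase"
  loc :: "'n \<Rightarrow> 'n option"   \<comment> \<open>local variable N of thread inserting X\<close>

datatype 'n lbl = LRead 'n | LPrep 'n | LCasOk 'n | LCasFail 'n | LClock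

inductive step :: "'n \<Rightarrow> 'n \<Rightarrow> 'n \<Rightarrow> 'n conf \<Rightarrow> 'n lbl \<Rightarrow> 'n conf \<Rightarrow> bool"
  for A B C where
  read: "\<lbrakk> X \<in> {B, C}; ph s X = PRead \<rbrakk> \<Longrightarrow>
    step A B C s (LRead X) (s\<lparr>ph := (ph s)(X := PPrep), loc := (loc s)(X := nxt s A)\<rparr>)"
| prep: "\<lbrakk> X \<in> {B, C}; ph s X = PPrep; v > clk s \<rbrakk> \<Longrightarrow>
    step A B C s (LPrep X)
      (s\<lparr>ts := (ts s)(X := v), clk := v, nxt := (nxt s)(X := loc s X), ph := (ph s)(X := PCas)\<rparr>)"
| casok: "\<lbrakk> X \<in> {B, C}; ph s X = PCas; nxt s A = loc s X \<rbrakk> \<Longrightarrow>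
    step A B C s (LCasOk X) (s\<lparr>nxt := (nxt s)(A := Some X), ph := (ph s)(X := PDone)\<rparr>)"
| casfail: "\<lbrakk> X \<in> {B, C}; ph s X = PCas; nxt s A \<noteq> loc s X \<rbrakk> \<Longrightarrow>
    step A B C s (LCasFail X) (s\<lparr>ph := (ph s)(X := PRead)\<rparr>)"
| clock: "v > clk s \<Longrightarrow> step A B C s LClock (s\<lparr>clk := v\<rparr>)"
  \<comment> \<open>clock draws by unrelated operations (which do not touch the list)\<close>

inductive run :: "'n \<Rightarrow> 'n \<Rightarrow> 'n \<Rightarrow> 'n conf \<Rightarrow> 'n lbl list \<Rightarrow> 'n conf \<Rightarrow> bool"
  for A B C where
  run_nil: "run A B C s [] s"
| run_cons: "\<lbrakk> step A B C s l s'; run A B C s' ls s'' \<rbrakk> \<Longrightarrow> run A B C s (l # ls) s''"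

end

theory Submission
  imports Defs
begin

text \<open>While \<open>Y\<close> is not yet inserted, an inserted \<open>X\<close> is the successor of \<open>A\<close>; and whenever
\<open>Y\<close> is about to CAS expecting \<open>X\<close> as the successor of \<open>A\<close>, it has already set \<open>Y.next = X\<close>
and drawn its timestamp after \<open>X\<close> had drawn its own. So if \<open>X\<close>'s CAS succeeds first, the
later successful CAS of \<open>Y\<close> must have expected \<open>X\<close>, which gives \<open>A \<rightarrow> Y \<rightarrow> X\<close> and
\<open>X.ts < Y.ts\<close>; once both threads are done, the steps of the remaining trace leave these
fields untouched.\<close>

definition insert_order_inv :: "'n \<Rightarrow> 'n \<Rightarrow> 'n \<Rightarrow> 'n conf \<Rightarrow> bool" where
  "insert_order_inv A X Y s \<longleftrightarrow>
    (ph s X \<in> {PCas, PDone} \<longrightarrow> ts s X \<le> clk s) \<and>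
    (nxt s A = Some X \<longrightarrow> ph s X = PDone) \<and>
    (ph s X = PDone \<and> ph s Y \<noteq> PDone \<longrightarrow> nxt s A = Some X) \<and>
    (ph s Y = PPrep \<and> loc s Y = Some X \<longrightarrow> ph s X = PDone) \<and>
    (ph s Y = PCas \<and> loc s Y = Some X \<longrightarrow>
       ph s X = PDone \<and> ts s X < ts s Y \<and> nxt s Y = Some X)"

lemma step_preserves_insert_order_inv:
  assumes "distinct [A, X, Y]" "step A X Y s l s'" "insert_order_inv A X Y s"
  shows "insert_order_inv A X Y s'"
proof -
  have neq: "A \<noteq> X" "A \<noteq> Y" "X \<noteq> Y" "X \<noteq> A" "Y \<noteq> A" "Y \<noteq> X"
    using assms(1) by auto
  from assms(2) show ?thesis
  proof cases
    case (read Z)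
    then consider "Z = X" | "Z = Y" by blast
    then show ?thesis
      using read assms(3) by cases (auto simp: insert_order_inv_def neq)
  next
    case (prep Z v)
    then consider "Z = X" | "Z = Y" by blast
    then show ?thesis
      using prep assms(3) by cases (auto simp: insert_order_inv_def neq)
  next
    case (casok Z)
    then consider "Z = X" | "Z = Y" by blast
    then show ?thesis
      using casok assms(3) by cases (auto simp: insert_order_inv_def neq)
  next
    case (casfail Z)
    then consider "Z = X" | "Z = Y" by blast
    then show ?thesis
      using casfail assms(3) by cases (auto simp: insert_order_inv_def neq)
  next
    case (clock v)
    then show ?thesis
      using assms(3) by (auto simp: insert_order_inv_def)
  qed
qed

lemma run_preserves_insert_order_inv:
  "run A X Y s tr s' \<Longrightarrow> distinct [A, X, Y] \<Longrightarrow> insert_order_inv A X Y s \<Longrightarrow>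
   insert_order_inv A X Y s'"
proof (induction rule: run.induct)
  case (run_cons s l s' ls s'')
  then have "insert_order_inv A X Y s'"
    using step_preserves_insert_order_inv by metis
  with run_cons show ?case by blast
qed simp

lemma step_keeps_done: "step A B C s l s' \<Longrightarrow> ph s X = PDone \<Longrightarrow> ph s' X = PDone"
  by (cases rule: step.cases) auto

lemma run_keeps_done: "run A B C s tr s' \<Longrightarrow> ph s X = PDone \<Longrightarrow> ph s' X = PDone"
  by (induction rule: run.induct) (auto dest: step_keeps_done)

lemma step_CasOk_done: "step A B C s (LCasOk X) s' \<Longrightarrow> ph s' X = PDone"
  by (cases rule: step.cases) auto

lemma run_CasOk_done: "run A B C s tr s' \<Longrightarrow> LCasOk X \<in> set tr \<Longrightarrow> ph s' X = PDone"
proof (induction rule: run.induct)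
  case (run_cons s l s' ls s'')
  show ?case
  proof (cases "l = LCasOk X")
    case True
    with run_cons.hyps(1) have "ph s' X = PDone"
      by (simp add: step_CasOk_done)
    with run_cons.hyps(2) show ?thesis
      by (rule run_keeps_done)
  next
    case False
    with run_cons show ?thesis by simp
  qed
qed simp

lemma step_frozen_when_both_done:
  "step A B C s l s' \<Longrightarrow> ph s B = PDone \<Longrightarrow> ph s C = PDone \<Longrightarrow>
   nxt s' = nxt s \<and> ts s' = ts s \<and> ph s' = ph s"
  by (cases rule: step.cases) auto

lemma run_frozen_when_both_done:
  "run A B C s tr s' \<Longrightarrow> ph s B = PDone \<Longrightarrow> ph s C = PDone \<Longrightarrow>
   nxt s' = nxt s \<and> ts s' = ts s"
proof (induction rule: run.induct)
  case (run_cons s l s' ls s'')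
  then show ?case
    using step_frozen_when_both_done[OF run_cons.hyps(1)] by simp
qed simp

inductive_cases run_ConsE: "run A B C s (l # ls) s''"

lemma run_appendE:
  assumes "run A B C s (xs @ ys) s''"
  obtains s' where "run A B C s xs s'" "run A B C s' ys s''"
  using assms
proof (induction xs arbitrary: s thesis)
  case Nil
  from Nil.prems(2) have "run A B C s ys s''"
    by simp
  with run.run_nil show ?case
    by (rule Nil.prems(1))
next
  case (Cons x xs)
  from Cons.prems(2) have "run A B C s (x # xs @ ys) s''"
    by simp
  then obtain t where first: "step A B C s x t"
    and tail: "run A B C t (xs @ ys) s''"
    by (rule run_ConsE)
  obtain s' where rest: "run A B C t xs s'" and last: "run A B C s' ys s''"
    by (rule Cons.IH[OF _ tail])
  from run.run_cons[OF first rest] last show ?case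
    by (rule Cons.prems(1))
qed

lemma run_split_at_nth:
  assumes "run A B C s tr s'" "j < length tr"
  obtains s1 s2 where "run A B C s (take j tr) s1" "step A B C s1 (tr ! j) s2"
    "run A B C s2 (drop (Suc j) tr) s'"
proof -
  have "take j tr @ tr ! j # drop (Suc j) tr = tr"
    by (rule id_take_nth_drop[OF assms(2), symmetric])
  with assms(1) have "run A B C s (take j tr @ tr ! j # drop (Suc j) tr) s'"
    by simp
  then obtain s1 where before: "run A B C s (take j tr) s1"
    and rest: "run A B C s1 (tr ! j # drop (Suc j) tr) s'"
    by (rule run_appendE)
  from rest obtain s2 where "step A B C s1 (tr ! j) s2" "run A B C s2 (drop (Suc j) tr) s'"
    by (rule run_ConsE)
  with before show thesis
    by (rule that)
qed

lemma second_CasOk_links_behind_first: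
  assumes "distinct [A, X, Y]" "insert_order_inv A X Y s" "ph s X = PDone"
    and "step A X Y s (LCasOk Y) s'"
  shows "ts s' X < ts s' Y \<and> nxt s' A = Some Y \<and> nxt s' Y = Some X"
  using assms(4)
proof cases
  case casok
  then have "nxt s A = Some X"
    using assms(2,3) by (simp add: insert_order_inv_def)
  with casok have "loc s Y = Some X"
    by simp
  with casok have "ts s X < ts s Y \<and> nxt s Y = Some X"
    using assms(2) by (simp add: insert_order_inv_def)
  with casok show ?thesis
    using assms(1) by auto
qed

theorem mainTheorem1:
  fixes A B C :: 'n and s0 s :: "'n conf" and tr :: "'n lbl list"
  assumes distinct: "distinct [A, B, C]"
    and new_nodes: "nxt s0 A \<noteq> Some B" "nxt s0 A \<noteq> Some C"
    and init: "ph s0 B = PRead" "ph s0 C = PRead"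
    and exec: "run A B C s0 tr s"
    and finished: "ph s B = PDone" "ph s C = PDone"
    and B_first: "i < j" "j < length tr" "tr ! i = LCasOk B" "tr ! j = LCasOk C"
  shows "ts s B < ts s C \<and> nxt s A = Some C \<and> nxt s C = Some B"
proof -
  \<comment> \<open>\<open>finished\<close> and the second \<open>new_nodes\<close> hypothesis are not needed: both CASes occur in \<open>tr\<close>.\<close>
  obtain s1 s2 where before: "run A B C s0 (take j tr) s1"
    and cas_C: "step A B C s1 (tr ! j) s2" and after: "run A B C s2 (drop (Suc j) tr) s"
    by (rule run_split_at_nth[OF exec B_first(2)])
  have "insert_order_inv A B C s0"
    using new_nodes(1) init by (simp add: insert_order_inv_def)
  with before distinct have inv: "insert_order_inv A B C s1"
    by (rule run_preserves_insert_order_inv)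
  have "i < length (take j tr)" "take j tr ! i = LCasOk B"
    using B_first by simp_all
  then have B_done: "ph s1 B = PDone"
    by (metis nth_mem run_CasOk_done[OF before])
  from cas_C B_first(4) have cas_C: "step A B C s1 (LCasOk C) s2"
    by simp
  have "ph s2 B = PDone" "ph s2 C = PDone"
    using step_keeps_done[OF cas_C B_done] step_CasOk_done[OF cas_C] .
  then show ?thesis
    using run_frozen_when_both_done[OF after]
      second_CasOk_links_behind_first[OF distinct inv B_done cas_C] by simp
qed

end
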